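(* Let $d\ge1$, $n\ge3$, $u\in\mathbb{C}\setminus\{0\}$. The algebra $\mathrm{FTL}_{d,n}(u)$ is the algebra generated by $t_1,\ldots,t_n,g_1,\ldots,g_{n-1}$ subject to the defining relations of $\mathrm{Y}_{d,n}(u)$ together with the single relation $r_{1,2}=0$.
   Context: The Yokonuma–Hecke algebra $\mathrm{Y}_{d,n}(u)$ is the unital associative $\mathbb{C}$-algebra with generators $g_1,\ldots,g_{n-1},t_1,\ldots,t_n$ and relations: $g_ig_j=g_jg_i$ for $|i-j|>1$; $g_{i+1}g_ig_{i+1}=g_ig_{i+1}g_i$; $t_it_j=t_jt_i$; $t_i^d=1$; $g_it_i=t_{i+1}g_i$; $g_it_{i+1}=t_ig_i$; $g_it_j=t_jg_i$ for $j\ne i,i+1$; $g_i^2=1+(u-1)e_i+(u-1)e_ig_i$, where $e_i=\frac1d\sum_{s=0}^{d-1}t_i^st_{i+1}^{d-s}$. For $w\in S_n$ with reduced expression $s_{i_1}\cdots s_{i_k}$ put $g_w=g_{i_1}\cdots g_{i_k}$; $g_{i,i+1}=\sum_{w\in\langle s_i,s_{i+1}\rangle}g_w$ and $r_{i,i+1}=\sum_{a,b=0}^{d-1}t_i^{a}t_{i+1}^{b-a}t_{i+2}^{-b}\,g_{i,i+1}$. $\mathrm{FTL}_{d,n}(u)$ is defined as the quotient of $\mathrm{Y}_{d,n}(u)$ by the two-sided ideal generated by all $r_{i,i+1}$, $1\le i\le n-2$. *)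

theory Defs
  imports Complex_Main
begin

text \<open>A unital associative complex algebra is modelled by a type of class ring_1
(not necessarily commutative) together with a unital ring homomorphism sc
from the complex numbers into the centre (the scalar action is c.x = sc c * x).\<close>

definition cscalars :: "(complex \<Rightarrow> 'a::ring_1) \<Rightarrow> bool" where
  "cscalars sc \<longleftrightarrow> sc 1 = 1 \<and> (\<forall>a b. sc (a + b) = sc a + sc b)
     \<and> (\<forall>a b. sc (a * b) = sc a * sc b) \<and> (\<forall>a x. sc a * x = x * sc a)"

text \<open>Integer powers of an element x with x^d = 1: x^k := x^(k mod d).\<close>
definition tpow :: "nat \<Rightarrow> 'a::ring_1 \<Rightarrow> int \<Rightarrow> 'a" where
  "tpow d x k = x ^ nat (k mod int d)"

definition YH_e :: "(complex \<Rightarrow> 'a::ring_1) \<Rightarrow> nat \<Rightarrow> (nat \<Rightarrow> 'a) \<Rightarrow> nat \<Rightarrow> 'a" where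
  "YH_e sc d t i = sc (1 / of_nat d) * (\<Sum>s<d. t i ^ s * t (Suc i) ^ (d - s))"

text \<open>Sum of g_w over the parabolic subgroup generated by s_i, s_(i+1) (six elements).\<close>
definition YH_gg :: "(nat \<Rightarrow> 'a::ring_1) \<Rightarrow> nat \<Rightarrow> 'a" where
  "YH_gg g i = 1 + g i + g (Suc i) + g i * g (Suc i) + g (Suc i) * g i
              + g i * g (Suc i) * g i"

definition YH_r :: "nat \<Rightarrow> (nat \<Rightarrow> 'a::ring_1) \<Rightarrow> (nat \<Rightarrow> 'a) \<Rightarrow> nat \<Rightarrow> 'a" where
  "YH_r d g t i = (\<Sum>a<d. \<Sum>b<d. t i ^ a * tpow d (t (Suc i)) (int b - int a)
                                    * tpow d (t (i + 2)) (- int b)) * YH_gg g i"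

definition YH_rels :: "(complex \<Rightarrow> 'a::ring_1) \<Rightarrow> nat \<Rightarrow> nat \<Rightarrow> complex
                        \<Rightarrow> (nat \<Rightarrow> 'a) \<Rightarrow> (nat \<Rightarrow> 'a) \<Rightarrow> bool" where
  "YH_rels sc d n u g t \<longleftrightarrow>
     (\<forall>i j. 1 \<le> i \<and> i \<le> n - 1 \<and> 1 \<le> j \<and> j \<le> n - 1 \<and> (i + 1 < j \<or> j + 1 < i)
            \<longrightarrow> g i * g j = g j * g i)
   \<and> (\<forall>i. 1 \<le> i \<and> i \<le> n - 2 \<longrightarrow> g (i+1) * g i * g (i+1) = g i * g (i+1) * g i)
   \<and> (\<forall>i j. 1 \<le> i \<and> i \<le> n \<and> 1 \<le> j \<and> j \<le> n \<longrightarrow> t i * t j = t j * t i)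
   \<and> (\<forall>i. 1 \<le> i \<and> i \<le> n \<longrightarrow> t i ^ d = 1)
   \<and> (\<forall>i. 1 \<le> i \<and> i \<le> n - 1 \<longrightarrow> g i * t i = t (i+1) * g i)
   \<and> (\<forall>i. 1 \<le> i \<and> i \<le> n - 1 \<longrightarrow> g i * t (i+1) = t i * g i)
   \<and> (\<forall>i j. 1 \<le> i \<and> i \<le> n - 1 \<and> 1 \<le> j \<and> j \<le> n \<and> j \<noteq> i \<and> j \<noteq> i + 1
            \<longrightarrow> g i * t j = t j * g i)
   \<and> (\<forall>i. 1 \<le> i \<and> i \<le> n - 1 \<longrightarrow>
        g i ^ 2 = 1 + sc (u - 1) * YH_e sc d t i + sc (u - 1) * YH_e sc d t i * g i)"

end

theory Submission
  imports Defs
begin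

text \<open>Put D = g(n-1) ... g(1). The braid and commutation relations give
  g(k) D = D g(k+1) and t(j) D = D t(j+1) for small indices, hence
  r(i,i+1) D = D r(i+1,i+2). Each g(i), and therefore D, is left invertible:
  e(i) is idempotent, and the quadratic relation then exhibits the left inverse
  (1 + (1/u - 1) e(i)) (g(i) - (u - 1) e(i)). So r(1,2) = 0 propagates to every r(i,i+1).\<close>

lemma power_mult_distrib_commuting:
  fixes a b :: "'a::monoid_mult"
  assumes "a * b = b * a"
  shows "(a * b) ^ k = a ^ k * b ^ k"
proof (induction k)
  case (Suc k)
  have "b * a ^ k = a ^ k * b"
    using power_commuting_commutes[of a b k] assms by simp
  then show ?case
    using Suc by (simp add: mult.assoc) (metis mult.assoc)
qed simp

lemma root_of_unity_mult_sum_powers: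
  fixes x :: "'a::ring_1"
  assumes "x ^ d = 1"
  shows "x ^ k * (\<Sum>s<d. x ^ s) = (\<Sum>s<d. x ^ s)"
proof (induction k)
  case (Suc k)
  have "x * (\<Sum>s<d. x ^ s) = (\<Sum>s<d. x ^ s)"
  proof (cases d)
    case (Suc d')
    have "x * (\<Sum>s<d. x ^ s) = (\<Sum>s<d. x ^ Suc s)"
      by (simp add: sum_distrib_left)
    also have "\<dots> = (\<Sum>s<d'. x ^ Suc s) + x ^ d"
      by (simp add: Suc)
    also have "\<dots> = (\<Sum>s<d. x ^ s)"
      using assms by (simp add: Suc sum.lessThan_Suc_shift del: sum.lessThan_Suc)
    finally show ?thesis .
  qed simp
  then show ?case
    using Suc by (metis mult.assoc power_Suc2)
qed simp

lemma root_of_unity_sum_powers_square: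
  fixes x :: "'a::ring_1"
  assumes "x ^ d = 1"
  shows "(\<Sum>s<d. x ^ s) * (\<Sum>s<d. x ^ s) = of_nat d * (\<Sum>s<d. x ^ s)"
  by (simp add: sum_distrib_right root_of_unity_mult_sum_powers[OF assms])

text \<open>Since b^(d-1) is the inverse of b, the sum defining d e(i) is a geometric sum
  in the root of unity t(i) t(i+1)^(d-1).\<close>
lemma sum_powers_eq_geometric:
  fixes a b :: "'a::ring_1"
  assumes ab: "a * b = b * a" and bd: "b ^ d = 1"
  shows "(\<Sum>s<d. a ^ s * b ^ (d - s)) = (\<Sum>s<d. (a * b ^ (d - 1)) ^ s)"
proof (rule sum.cong)
  fix s assume "s \<in> {..<d}"
  then have s: "s < d" by simp
  have b_power: "b ^ (d - s) = (b ^ (d - 1)) ^ s"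
  proof (cases s)
    case (Suc s')
    have "(d - 1) * s = (d - s) + d * s'"
      using s Suc by (simp add: algebra_simps)
    then have "(b ^ (d - 1)) ^ s = b ^ (d - s) * (b ^ d) ^ s'"
      by (simp add: power_mult[symmetric] power_add)
    then show ?thesis using bd by simp
  qed (use bd in simp)
  have "a * b ^ (d - 1) = b ^ (d - 1) * a"
    using power_commuting_commutes[OF ab[symmetric]] by simp
  then show "a ^ s * b ^ (d - s) = (a * b ^ (d - 1)) ^ s"
    unfolding b_power by (rule power_mult_distrib_commuting[symmetric])
qed simp

lemma root_of_unity_mixed_sum_square:
  fixes a b :: "'a::ring_1"
  assumes ab: "a * b = b * a" and ad: "a ^ d = 1" and bd: "b ^ d = 1"
  shows "(\<Sum>s<d. a ^ s * b ^ (d - s)) * (\<Sum>s<d. a ^ s * b ^ (d - s))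
         = of_nat d * (\<Sum>s<d. a ^ s * b ^ (d - s))"
proof -
  have "a * b ^ (d - 1) = b ^ (d - 1) * a"
    using power_commuting_commutes[OF ab[symmetric]] by simp
  then have "(a * b ^ (d - 1)) ^ d = a ^ d * (b ^ (d - 1)) ^ d"
    by (rule power_mult_distrib_commuting)
  also have "\<dots> = 1"
    using ad bd by (simp add: power_mult[symmetric] mult.commute power_mult)
  finally have "(a * b ^ (d - 1)) ^ d = 1" .
  then show ?thesis
    unfolding sum_powers_eq_geometric[OF ab bd] by (rule root_of_unity_sum_powers_square)
qed

lemma quadratic_left_inverse:
  fixes g e a b :: "'a::ring_1"
  assumes ee: "e * e = e" and be: "b * e = e * b" and ab: "a + b + a * b = 0"
    and quadratic: "g * g = 1 + b * e + b * e * g"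
  shows "(1 + a * e) * (g - b * e) * g = 1"
proof -
  have "(1 + a * e) * (g - b * e) * g = (1 + a * e) * (g * g - b * e * g)"
    by (simp add: mult.assoc algebra_simps)
  also have "\<dots> = 1 + b * e + a * e + a * (e * b) * e"
    using quadratic by (simp add: algebra_simps mult.assoc)
  also have "\<dots> = 1 + (a + b + a * b) * e"
    by (simp add: be[symmetric] algebra_simps mult.assoc ee)
  finally show ?thesis
    using ab by simp
qed

lemma left_invertible_mult:
  fixes x y :: "'a::monoid_mult"
  assumes "\<exists>l. l * x = 1" and "\<exists>l. l * y = 1"
  shows "\<exists>l. l * (x * y) = 1"
proof -
  obtain lx ly where "lx * x = 1" and "ly * y = 1"
    using assms by blast
  then have "(ly * lx) * (x * y) = 1"
    by (metis mult.assoc mult_1_left)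
  then show ?thesis ..
qed

lemma intertwine_mult:
  fixes X Y D :: "'a::ring_1"
  shows "X * D = D * X' \<Longrightarrow> Y * D = D * Y' \<Longrightarrow> (X * Y) * D = D * (X' * Y')"
  by (metis mult.assoc)

lemma intertwine_add:
  fixes X Y D :: "'a::ring_1"
  shows "X * D = D * X' \<Longrightarrow> Y * D = D * Y' \<Longrightarrow> (X + Y) * D = D * (X' + Y')"
  by (simp add: distrib_left distrib_right)

lemma intertwine_one: "1 * D = D * (1::'a::ring_1)"
  by simp

lemma intertwine_power:
  fixes X D :: "'a::ring_1"
  assumes "X * D = D * X'"
  shows "X ^ k * D = D * X' ^ k"
  by (induction k) (simp_all, metis assms mult.assoc)

lemma intertwine_sum:
  fixes D :: "'a::ring_1"
  shows "(\<And>x. x \<in> A \<Longrightarrow> f x * D = D * f' x) \<Longrightarrow> sum f A * D = D * sum f' A"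
  by (simp add: sum_distrib_left sum_distrib_right)

context
  fixes sc :: "complex \<Rightarrow> 'a::ring_1"
  assumes sc: "cscalars sc"
begin

lemma cscalars_add: "sc (a + b) = sc a + sc b"
  using sc unfolding cscalars_def by blast

lemma cscalars_mult: "sc (a * b) = sc a * sc b"
  using sc unfolding cscalars_def by blast

lemma cscalars_central: "sc a * x = x * sc a"
  using sc unfolding cscalars_def by blast

lemma cscalars_one: "sc 1 = 1"
  using sc unfolding cscalars_def by blast

lemma cscalars_zero: "sc 0 = 0"
  using cscalars_add[of 0 0] by simp

lemma cscalars_of_nat: "sc (of_nat k) = of_nat k"
  by (induction k) (simp_all add: cscalars_add cscalars_one cscalars_zero)

end

fun descending_word :: "(nat \<Rightarrow> 'a::monoid_mult) \<Rightarrow> nat \<Rightarrow> 'a" where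
  "descending_word g 0 = 1"
| "descending_word g (Suc m) = g (Suc m) * descending_word g m"

locale yokonuma_hecke =
  fixes sc :: "complex \<Rightarrow> 'a::ring_1" and d n :: nat and u :: complex
    and g t :: "nat \<Rightarrow> 'a"
  assumes d_pos: "d \<ge> 1" and u_nonzero: "u \<noteq> 0"
    and scalars: "cscalars sc"
    and rels: "YH_rels sc d n u g t"
begin

lemma g_far_commute:
  "1 \<le> i \<Longrightarrow> i \<le> n - 1 \<Longrightarrow> 1 \<le> j \<Longrightarrow> j \<le> n - 1 \<Longrightarrow> i + 1 < j \<or> j + 1 < i
   \<Longrightarrow> g i * g j = g j * g i"
  using rels unfolding YH_rels_def by blast

lemma g_braid: "1 \<le> i \<Longrightarrow> i \<le> n - 2 \<Longrightarrow> g (i+1) * g i * g (i+1) = g i * g (i+1) * g i"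
  using rels unfolding YH_rels_def by blast

lemma t_commute: "1 \<le> i \<Longrightarrow> i \<le> n \<Longrightarrow> 1 \<le> j \<Longrightarrow> j \<le> n \<Longrightarrow> t i * t j = t j * t i"
  using rels unfolding YH_rels_def by blast

lemma t_power_d: "1 \<le> i \<Longrightarrow> i \<le> n \<Longrightarrow> t i ^ d = 1"
  using rels unfolding YH_rels_def by blast

lemma g_t_Suc: "1 \<le> i \<Longrightarrow> i \<le> n - 1 \<Longrightarrow> g i * t (i+1) = t i * g i"
  using rels unfolding YH_rels_def by blast

lemma g_t_commute:
  "1 \<le> i \<Longrightarrow> i \<le> n - 1 \<Longrightarrow> 1 \<le> j \<Longrightarrow> j \<le> n \<Longrightarrow> j \<noteq> i \<Longrightarrow> j \<noteq> i + 1
   \<Longrightarrow> g i * t j = t j * g i"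
  using rels unfolding YH_rels_def by blast

lemma g_quadratic:
  "1 \<le> i \<Longrightarrow> i \<le> n - 1 \<Longrightarrow>
   g i * g i = 1 + sc (u - 1) * YH_e sc d t i + sc (u - 1) * YH_e sc d t i * g i"
  using rels unfolding YH_rels_def by (simp add: power2_eq_square)

lemma e_idempotent:
  assumes "1 \<le> i" "i \<le> n - 1"
  shows "YH_e sc d t i * YH_e sc d t i = YH_e sc d t i"
proof -
  define S where "S = (\<Sum>s<d. t i ^ s * t (Suc i) ^ (d - s))"
  define c where "c = sc (1 / of_nat d)"
  have SS: "S * S = of_nat d * S"
    unfolding S_def using assms
    by (intro root_of_unity_mixed_sum_square) (auto intro: t_commute t_power_d)
  have "c * S * (c * S) = c * c * (S * S)"
    unfolding c_def by (metis mult.assoc cscalars_central[OF scalars])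
  also have "\<dots> = sc (1 / of_nat d * (1 / of_nat d) * of_nat d) * S"
    unfolding c_def SS
    by (simp only: cscalars_of_nat[OF scalars, symmetric] cscalars_mult[OF scalars] mult.assoc)
  also have "1 / of_nat d * (1 / of_nat d) * of_nat d = 1 / (of_nat d :: complex)"
    using d_pos by (simp add: field_simps)
  finally show ?thesis
    unfolding YH_e_def S_def c_def .
qed

lemma g_left_invertible:
  assumes "1 \<le> i" "i \<le> n - 1"
  shows "\<exists>l. l * g i = 1"
proof -
  have "sc (1 / u - 1 + (u - 1) + (1 / u - 1) * (u - 1)) = 0"
    using u_nonzero by (simp add: field_simps cscalars_zero[OF scalars])
  then have "sc (1 / u - 1) + sc (u - 1) + sc (1 / u - 1) * sc (u - 1) = 0"
    by (simp only: cscalars_add[OF scalars] cscalars_mult[OF scalars])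
  then have "(1 + sc (1 / u - 1) * YH_e sc d t i) * (g i - sc (u - 1) * YH_e sc d t i) * g i = 1"
    using assms
    by (intro quadratic_left_inverse e_idempotent g_quadratic cscalars_central[OF scalars])
  then show ?thesis
    by (metis mult.assoc)
qed

lemma descending_word_left_invertible:
  "m \<le> n - 1 \<Longrightarrow> \<exists>l. l * descending_word g m = 1"
  by (induction m) (auto intro!: left_invertible_mult g_left_invertible)

lemma g_descending_word_commute:
  "m + 2 \<le> j \<Longrightarrow> j \<le> n - 1 \<Longrightarrow> g j * descending_word g m = descending_word g m * g j"
proof (induction m)
  case (Suc m)
  have "g j * g (Suc m) = g (Suc m) * g j"
    using Suc.prems by (intro g_far_commute) auto
  then show ?case
    using Suc by (simp add: mult.assoc) (metis mult.assoc)
qed simp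

lemma t_descending_word_commute:
  "m + 2 \<le> j \<Longrightarrow> j \<le> n \<Longrightarrow> t j * descending_word g m = descending_word g m * t j"
proof (induction m)
  case (Suc m)
  have "g (Suc m) * t j = t j * g (Suc m)"
    using Suc.prems by (intro g_t_commute) auto
  then show ?case
    using Suc by (simp add: mult.assoc) (metis mult.assoc)
qed simp

lemma g_descending_word_shift:
  "1 \<le> k \<Longrightarrow> k + 1 \<le> m \<Longrightarrow> m \<le> n - 1
   \<Longrightarrow> g k * descending_word g m = descending_word g m * g (k+1)"
proof (induction m)
  case (Suc m)
  show ?case
  proof (cases "m = k")
    case True
    obtain k' where k: "k = Suc k'"
      using Suc.prems by (cases k) auto
    have far: "g (k+1) * descending_word g k' = descending_word g k' * g (k+1)"
      using Suc.prems True k by (intro g_descending_word_commute) auto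
    have braid: "g (k+1) * g k * g (k+1) = g k * g (k+1) * g k"
      using Suc.prems True by (intro g_braid) auto
    have "descending_word g (Suc m) * g (k+1) = g (k+1) * g k * (descending_word g k' * g (k+1))"
      using True k by (simp add: mult.assoc)
    also have "\<dots> = (g (k+1) * g k * g (k+1)) * descending_word g k'"
      by (simp only: far mult.assoc)
    also have "\<dots> = g k * descending_word g (Suc m)"
      using True k braid by (simp add: mult.assoc)
    finally show ?thesis ..
  next
    case False
    have comm: "g (Suc m) * g k = g k * g (Suc m)"
      using Suc.prems False by (intro g_far_commute) auto
    have "g k * descending_word g (Suc m) = g (Suc m) * (g k * descending_word g m)"
      by (simp add: comm mult.assoc[symmetric])
    also have "\<dots> = descending_word g (Suc m) * g (k+1)"
      using Suc False by (simp add: mult.assoc)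
    finally show ?thesis .
  qed
qed simp

lemma t_descending_word_shift:
  "1 \<le> j \<Longrightarrow> j \<le> m \<Longrightarrow> m \<le> n - 1
   \<Longrightarrow> t j * descending_word g m = descending_word g m * t (j+1)"
proof (induction m)
  case (Suc m)
  show ?case
  proof (cases "Suc m = j")
    case True
    have far: "t (j+1) * descending_word g m = descending_word g m * t (j+1)"
      using Suc.prems True by (intro t_descending_word_commute) auto
    have swap: "g j * t (j+1) = t j * g j"
      using Suc.prems True by (intro g_t_Suc) auto
    have "descending_word g (Suc m) * t (j+1) = g j * (descending_word g m * t (j+1))"
      using True by (metis descending_word.simps(2) mult.assoc)
    also have "\<dots> = (g j * t (j+1)) * descending_word g m"
      by (simp only: far mult.assoc)
    also have "\<dots> = t j * descending_word g (Suc m)"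
      using swap True by (metis descending_word.simps(2) mult.assoc)
    finally show ?thesis ..
  next
    case False
    have comm: "g (Suc m) * t j = t j * g (Suc m)"
      using Suc.prems False by (intro g_t_commute) auto
    have "t j * descending_word g (Suc m) = g (Suc m) * (t j * descending_word g m)"
      by (simp add: comm mult.assoc[symmetric])
    also have "\<dots> = descending_word g (Suc m) * t (j+1)"
      using Suc False by (simp add: mult.assoc)
    finally show ?thesis .
  qed
qed simp

lemma r_descending_word_shift:
  assumes "1 \<le> i" "i + 1 \<le> n - 2"
  shows "YH_r d g t i * descending_word g (n-1)
       = descending_word g (n-1) * YH_r d g t (Suc i)"
proof -
  define D where "D = descending_word g (n-1)"
  have t_shift: "t j * D = D * t (Suc j)" if "1 \<le> j" "j \<le> n - 1" for j
    using t_descending_word_shift[of j "n-1"] that unfolding D_def by simp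
  have g_shift: "g k * D = D * g (Suc k)" if "1 \<le> k" "k + 1 \<le> n - 1" for k
    using g_descending_word_shift[of k "n-1"] that unfolding D_def by simp
  have "t (i + 2) * D = D * t (Suc i + 2)"
    using t_shift[of "i+2"] assms by simp
  moreover have "t i * D = D * t (Suc i)" "t (Suc i) * D = D * t (Suc (Suc i))"
    using t_shift assms by simp_all
  moreover have "g i * D = D * g (Suc i)" "g (Suc i) * D = D * g (Suc (Suc i))"
    using g_shift[of i] g_shift[of "Suc i"] assms by simp_all
  ultimately show ?thesis
    unfolding D_def[symmetric] YH_r_def YH_gg_def tpow_def
    by (intro intertwine_mult intertwine_add intertwine_one intertwine_sum intertwine_power)
qed

end

theorem corollary1:
  fixes sc :: "complex \<Rightarrow> 'a::ring_1" and g t :: "nat \<Rightarrow> 'a"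
    and d n :: nat and u :: complex
  assumes "d \<ge> 1" and "n \<ge> 3" and "u \<noteq> 0"
    and "cscalars sc"
    and "YH_rels sc d n u g t"
    and "YH_r d g t 1 = 0"
  shows "\<forall>i. 1 \<le> i \<and> i \<le> n - 2 \<longrightarrow> YH_r d g t i = 0"
proof -
  interpret yokonuma_hecke sc d n u g t
    using assms by unfold_locales
  obtain l where l: "l * descending_word g (n-1) = 1"
    using descending_word_left_invertible by blast
  have r_zero: "YH_r d g t (Suc k) = 0" if "k + 1 \<le> n - 2" for k
    using that
  proof (induction k)
    case (Suc k)
    have "descending_word g (n-1) * YH_r d g t (Suc (Suc k)) = 0"
      using r_descending_word_shift[of "Suc k"] Suc by simp
    then have "l * descending_word g (n-1) * YH_r d g t (Suc (Suc k)) = 0"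
      by (simp add: mult.assoc)
    then show ?case
      using l by simp
  qed (use assms(6) in simp)
  show ?thesis
  proof (intro allI impI)
    fix i assume "1 \<le> i \<and> i \<le> n - 2"
    then show "YH_r d g t i = 0"
      using r_zero[of "i - 1"] by (cases i) auto
  qed
qed

end
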